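(* Fix an integer base $B\ge 2$. For every integer $k>0$ there are infinitely many positive integers $n$ with $h(n)\le -k$.
   Context: For a positive integer $n$, $\delta(n)$ is the number of digits of $n$ in base $B$, i.e. $\delta(n)=k$ iff $B^{k-1}\le n<B^k$. Define $\delta'(1)=0$ and $\delta'(a)=\delta(a)$ for $a>1$. If $n=\prod_{i} p_i^{a_i}$ is the prime power factorisation, set $\phi(n)=\sum_i \big(\delta(p_i)+\delta'(a_i)\big)$ (with $\phi(1)=0$), and $h(n)=\delta(n)-\phi(n)$. *)

theory Defs
  imports "HOL-Computational_Algebra.Primes"
begin

definition ndigits :: "nat \<Rightarrow> nat \<Rightarrow> nat" where
  "ndigits B n = (THE k. B ^ (k - 1) \<le> n \<and> n < B ^ k)"

definition ndigits' :: "nat \<Rightarrow> nat \<Rightarrow> nat" where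
  "ndigits' B a = (if a = 1 then 0 else ndigits B a)"

definition phi_digits :: "nat \<Rightarrow> nat \<Rightarrow> nat" where
  "phi_digits B n = (\<Sum>p\<in>prime_factors n. ndigits B p + ndigits' B (multiplicity p n))"

definition h_digits :: "nat \<Rightarrow> nat \<Rightarrow> int" where
  "h_digits B n = int (ndigits B n) - int (phi_digits B n)"

end

theory Submission
  imports Defs "HOL-Real_Asymp.Real_Asymp" "HOL-Library.Infinite_Set"
begin

(* Pick m consecutive exponents j and primes p_j with B^j < p_j <= (49/25) B^j. Each p_j has
   j + 1 digits, so the product n of the p_j has phi(n) = sum (j + 1), whereas
   n < (49/25)^m B^(sum j) < B^(sum j + m - k) as soon as (49/(25 B))^m < B^(-k); since
   49/25 < 2 <= B this holds for large m, giving h(n) <= -k with n as large as we like.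
   The primes exist for all large j by a strengthened Bertrand postulate (a prime in
   (20t, 39t] for large t), which follows from Erdos' upper bound for the central
   binomial coefficient in terms of its prime factorisation. *)

section \<open>The primorial bound\<close>

lemma prod_primes_dvd:
  fixes S :: "nat set"
  assumes S: "finite S" "\<And>p. p \<in> S \<Longrightarrow> prime p" and dvd: "\<And>p. p \<in> S \<Longrightarrow> p dvd c"
  shows "\<Prod>S dvd c"
proof (cases "c = 0")
  case False
  show ?thesis
  proof (rule multiplicity_le_imp_dvd)
    show "\<Prod>S \<noteq> 0"
      using S by (metis not_prime_0 prod_zero_iff)
    fix q :: nat
    assume q: "prime q"
    have "multiplicity q (\<Prod>S) = multiplicity q (\<Prod>p\<in>S. p ^ 1)"
      by simp
    also have "\<dots> = (if q \<in> S then 1 else 0)"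
      using S q by (rule multiplicity_prod_prime_powers)
    also have "\<dots> \<le> multiplicity q c"
      using dvd[of q] False q by (auto simp: prime_multiplicity_gt_zero_iff Suc_le_eq)
    finally show "multiplicity q (\<Prod>S) \<le> multiplicity q c" .
  qed
qed simp

lemma prod_primes_between_dvd_binomial:
  fixes m n :: nat
  assumes "m \<le> n" "n \<le> 2 * m"
  shows "\<Prod>{p. prime p \<and> m < p \<and> p \<le> n} dvd n choose m"
proof (rule prod_primes_dvd)
  fix p
  assume p: "p \<in> {p. prime p \<and> m < p \<and> p \<le> n}"
  then have pp: "prime p"
    by simp
  have "p dvd fact m * fact (n - m) * (n choose m)"
    using binomial_fact_lemma[OF assms(1)] p by (simp add: prime_dvd_fact_iff)
  moreover have "m < p"
    using p by simp
  then have "n - m < p"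
    using assms by linarith
  then have "\<not> p dvd fact m" "\<not> p dvd fact (n - m)"
    using p by (simp_all add: prime_dvd_fact_iff)
  ultimately show "p dvd n choose m"
    by (simp add: prime_dvd_mult_iff[OF pp])
qed auto

lemma binomial_odd_middle_le: "(2 * m + 1) choose m \<le> 4 ^ m"
proof -
  have "2 * ((2 * m + 1) choose m) = (\<Sum>k\<in>{m, m + 1}. (2 * m + 1) choose k)"
    using binomial_symmetric[of m "2 * m + 1"] by simp
  also have "\<dots> \<le> (\<Sum>k\<le>2 * m + 1. (2 * m + 1) choose k)"
    by (intro sum_mono2) auto
  also have "\<dots> = 2 * 4 ^ m"
    by (subst choose_row_sum) (simp add: power_mult)
  finally show ?thesis
    by simp
qed

text \<open>Strong induction: for odd \<open>x = 2m + 1\<close> the primes in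
  \<open>(m + 1, x]\<close> divide \<open>x choose (m + 1)\<close>.\<close>
lemma primorial_le: "\<Prod>{p::nat. prime p \<and> p \<le> x} \<le> 4 ^ x"
proof (induction x rule: less_induct)
  case (less x)
  consider "x \<le> 1" | "x = 2" | "x > 2" "even x" | m where "x = 2 * m + 1" "m \<ge> 1"
    by (cases "x \<le> 1"; cases "x = 2"; cases "even x") (auto elim!: oddE)
  then show ?case
  proof cases
    case 1
    then have "{p::nat. prime p \<and> p \<le> x} = {}"
      by (auto dest: prime_ge_2_nat)
    then show ?thesis
      by (simp only: prod.empty one_le_power one_le_numeral)
  next
    case 2
    then have "{p::nat. prime p \<and> p \<le> x} = {2}"
      by (auto dest: prime_ge_2_nat)
    with 2 show ?thesis
      by simp
  next
    case 3
    then have "\<not> prime x"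
      using prime_odd_nat by blast
    then have "{p::nat. prime p \<and> p \<le> x} = {p. prime p \<and> p \<le> x - 1}"
      using 3 by (auto simp: le_less)
    also have "\<Prod>\<dots> \<le> 4 ^ (x - 1)"
      using 3 less by simp
    also have "\<dots> \<le> 4 ^ x"
      by simp
    finally show ?thesis .
  next
    case 4
    have split: "{p::nat. prime p \<and> p \<le> x}
        = {p. prime p \<and> p \<le> m + 1} \<union> {p. prime p \<and> m + 1 < p \<and> p \<le> x}"
      using 4 by auto
    have "\<Prod>{p. prime p \<and> m + 1 < p \<and> p \<le> x} \<le> x choose (m + 1)"
      using 4 by (intro dvd_imp_le[OF prod_primes_between_dvd_binomial]) auto
    also have "x choose (m + 1) = (2 * m + 1) choose m"
      using 4 binomial_symmetric[of "m + 1" x] by simp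
    also have "\<dots> \<le> 4 ^ m"
      by (rule binomial_odd_middle_le)
    finally have upper: "\<Prod>{p. prime p \<and> m + 1 < p \<and> p \<le> x} \<le> 4 ^ m" .
    have lower: "\<Prod>{p::nat. prime p \<and> p \<le> m + 1} \<le> 4 ^ (m + 1)"
      using 4 less.IH[of "m + 1"] by simp
    have "\<Prod>{p::nat. prime p \<and> p \<le> x}
        = \<Prod>{p. prime p \<and> p \<le> m + 1} * \<Prod>{p. prime p \<and> m + 1 < p \<and> p \<le> x}"
      unfolding split by (rule prod.union_disjoint) auto
    also have "\<dots> \<le> 4 ^ (m + 1) * 4 ^ m"
      using lower upper by (rule mult_le_mono)
    also have "\<dots> = 4 ^ x"
      using 4 by (simp flip: power_add)
    finally show ?thesis .
  qed
qed

section \<open>Prime factorisation of the central binomial coefficient\<close>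

lemma multiplicity_eq_card_prime_power_divisors:
  fixes p x :: nat
  assumes p: "prime p" and x: "0 < x" "x < p ^ Suc M"
  shows "multiplicity p x = card {k\<in>{1..M}. p ^ k dvd x}"
proof -
  have "p ^ multiplicity p x \<le> x"
    using x by (simp add: dvd_imp_le multiplicity_dvd)
  then have "p ^ multiplicity p x < p ^ Suc M"
    using x by linarith
  then have "multiplicity p x < Suc M"
    using power_less_imp_less_exp[OF prime_gt_1_nat[OF p]] by blast
  moreover have dvd_iff: "p ^ k dvd x \<longleftrightarrow> k \<le> multiplicity p x" for k
  proof (rule power_dvd_iff_le_multiplicity)
    show "x \<noteq> 0" "\<not> is_unit p"
      using x p by (auto simp: prime_gt_1_nat)
  qed
  ultimately have "{k\<in>{1..M}. p ^ k dvd x} = {1..multiplicity p x}"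
    by (auto simp: dvd_iff)
  then show ?thesis by simp
qed

text \<open>Legendre's formula; the bound on \<open>m\<close> only serves to make the sum finite.\<close>
lemma multiplicity_fact:
  fixes p m :: nat
  assumes p: "prime p" and m: "m < p ^ Suc M"
  shows "multiplicity p (fact m) = (\<Sum>k\<in>{1..M}. m div p ^ k)"
  using m
proof (induction m)
  case 0
  then show ?case by simp
next
  case (Suc m)
  have "multiplicity p (fact (Suc m) :: nat) = multiplicity p (Suc m * fact m)"
    by (simp only: fact_Suc of_nat_id)
  also have "\<dots> = multiplicity p (Suc m) + multiplicity p (fact m :: nat)"
    using p by (intro prime_elem_multiplicity_mult_distrib) auto
  also have "multiplicity p (Suc m) = card {k\<in>{1..M}. p ^ k dvd Suc m}"
    using Suc.prems p by (intro multiplicity_eq_card_prime_power_divisors) auto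
  also have "\<dots> = (\<Sum>k\<in>{1..M}. if p ^ k dvd Suc m then 1 else 0)"
    by (simp only: sum.inter_filter[OF finite_atLeastAtMost] card_eq_sum)
  also have "multiplicity p (fact m :: nat) = (\<Sum>k\<in>{1..M}. m div p ^ k)"
    using Suc by simp
  also have "(\<Sum>k\<in>{1..M}. if p ^ k dvd Suc m then 1 else 0) + (\<Sum>k\<in>{1..M}. m div p ^ k)
      = (\<Sum>k\<in>{1..M}. Suc m div p ^ k)"
    unfolding sum.distrib[symmetric] by (intro sum.cong refl) (auto simp: div_Suc dvd_eq_mod_eq_0)
  finally show ?case .
qed

lemma double_div_bounds:
  fixes n q :: nat
  shows "2 * (n div q) \<le> (2 * n) div q" "(2 * n) div q \<le> 2 * (n div q) + 1"
proof -
  have "(2 * (n mod q)) div q < 2"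
    by (cases "q = 0") (simp_all add: div_less_iff_less_mult)
  then show "2 * (n div q) \<le> (2 * n) div q" "(2 * n) div q \<le> 2 * (n div q) + 1"
    using div_mult1_eq[of 2 n q] by linarith+
qed

lemma multiplicity_central_binomial:
  fixes p n :: nat
  assumes p: "prime p" and M: "2 * n < p ^ Suc M"
  shows "multiplicity p ((2 * n) choose n) = (\<Sum>k\<in>{1..M}. (2 * n) div p ^ k - 2 * (n div p ^ k))"
proof -
  have "fact (2 * n) = ((2 * n) choose n) * (fact n * fact n :: nat)"
    using binomial_fact_lemma[of n "2 * n"] by (simp add: mult_ac mult_2)
  then have "multiplicity p (fact (2 * n) :: nat)
      = multiplicity p ((2 * n) choose n) + 2 * multiplicity p (fact n :: nat)"
    using p by (simp add: prime_elem_multiplicity_mult_distrib)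
  moreover have "multiplicity p (fact n :: nat) = (\<Sum>k\<in>{1..M}. n div p ^ k)"
    using M by (intro multiplicity_fact[OF p]) simp
  moreover have "multiplicity p (fact (2 * n) :: nat) = (\<Sum>k\<in>{1..M}. (2 * n) div p ^ k)"
    using M by (intro multiplicity_fact[OF p])
  ultimately have "multiplicity p ((2 * n) choose n)
      = (\<Sum>k\<in>{1..M}. (2 * n) div p ^ k) - (\<Sum>k\<in>{1..M}. 2 * (n div p ^ k))"
    by (simp add: sum_distrib_left)
  also have "\<dots> = (\<Sum>k\<in>{1..M}. (2 * n) div p ^ k - 2 * (n div p ^ k))"
    by (rule sum_subtractf_nat[symmetric]) (simp add: double_div_bounds)
  finally show ?thesis .
qed

text \<open>Each summand in Legendre's formula for \<open>2n choose n\<close> is at most 1, and vanishes once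
  \<open>p ^ k > 2 * n\<close>.\<close>
lemma prime_power_multiplicity_central_binomial_le:
  fixes p n :: nat
  assumes p: "prime p" and n: "n > 0"
  shows "p ^ multiplicity p ((2 * n) choose n) \<le> 2 * n"
proof (rule ccontr)
  define v where "v = multiplicity p ((2 * n) choose n)"
  assume "\<not> p ^ multiplicity p ((2 * n) choose n) \<le> 2 * n"
  then have big: "2 * n < p ^ v"
    by (simp add: v_def)
  have p1: "p > 1"
    using prime_gt_1_nat[OF p] .
  have "2 * n < 2 ^ (2 * n)"
    by (rule less_exp)
  also have "\<dots> \<le> p ^ (2 * n)"
    using p1 by (intro power_mono) auto
  also have "\<dots> \<le> p ^ Suc (2 * n)"
    using p1 by (intro power_increasing) auto
  finally have "v = (\<Sum>k\<in>{1..2 * n}. (2 * n) div p ^ k - 2 * (n div p ^ k))"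
    unfolding v_def by (rule multiplicity_central_binomial[OF p])
  also have "\<dots> \<le> (\<Sum>k\<in>{1..2 * n}. if k < v then 1 else 0)"
  proof (intro sum_mono)
    fix k
    show "(2 * n) div p ^ k - 2 * (n div p ^ k) \<le> (if k < v then 1 else 0)"
    proof (cases "k < v")
      case False
      then have "p ^ v \<le> p ^ k"
        using p1 by (intro power_increasing) auto
      with big False show ?thesis by simp
    qed (use double_div_bounds[of n "p ^ k"] in simp)
  qed
  also have "\<dots> = card {k\<in>{1..2 * n}. k < v}"
    by (simp add: sum.If_cases Int_def)
  also have "\<dots> \<le> card {1..<v}"
    by (intro card_mono) auto
  finally have "v \<le> v - 1"
    by simp
  moreover have "v > 0"
    using big n by (cases v) auto
  ultimately show False
    by simp
qed

lemma multiplicity_central_binomial_eq_0: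
  fixes p n :: nat
  assumes p: "prime p" and "2 * n < p * p" "2 * n < 3 * p" "p \<le> n"
  shows "multiplicity p ((2 * n) choose n) = 0"
proof -
  have "n div p = 1" "(2 * n) div p = 2"
    using assms prime_gt_0_nat[OF p] by (auto intro: div_nat_eqI)
  then show ?thesis
    using multiplicity_central_binomial[OF p, of n 1] assms by simp
qed

text \<open>Primes up to \<open>sqrt (2n)\<close> contribute at most \<open>2n\<close>; larger ones divide \<open>2n choose n\<close> at
  most once, and not at all if they lie in \<open>(2n/3, n]\<close>.\<close>
lemma prime_power_multiplicity_central_binomial_le_cases:
  fixes p n :: nat
  assumes p: "prime p" and n: "n > 0"
  shows "p ^ multiplicity p ((2 * n) choose n)
    \<le> (if p * p \<le> 2 * n then 2 * n else 1) * (if p \<le> 2 * n div 3 then p else 1)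
      * (if n < p then p else 1)"
proof -
  define v where "v = multiplicity p ((2 * n) choose n)"
  have p1: "p > 1"
    using prime_gt_1_nat[OF p] .
  have le: "p ^ v \<le> 2 * n"
    unfolding v_def using p n by (rule prime_power_multiplicity_central_binomial_le)
  show ?thesis
  proof (cases "p * p \<le> 2 * n")
    case True
    have "2 * n \<le> 2 * n * p" "2 * n * p \<le> 2 * n * p * p"
      using p1 by simp_all
    with True show ?thesis
      unfolding v_def[symmetric] by (intro order_trans[OF le]) auto
  next
    case False
    then have "p ^ v < p ^ 2"
      using le by (simp add: power2_eq_square)
    then have "v \<le> 1"
      using p1 power_less_imp_less_exp by fastforce
    moreover have "3 * p \<le> 2 * n" if "v = 1" "p \<le> n"
      using multiplicity_central_binomial_eq_0[OF p] False that by (force simp: v_def)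
    ultimately show ?thesis
      using False p1 by (auto simp: v_def le_Suc_eq less_eq_div_iff_mult_less_eq mult.commute)
  qed
qed

lemma central_binomial_le_erdos:
  fixes n :: nat
  assumes n: "n > 0"
  shows "(2 * n) choose n \<le> (2 * n) ^ card {p. prime p \<and> p * p \<le> 2 * n} * 4 ^ (2 * n div 3)
    * \<Prod>{p. prime p \<and> n < p \<and> p \<le> 2 * n}"
proof -
  define N where "N = (2 * n) choose n"
  define P where "P = {p. prime p \<and> p \<le> 2 * n}"
  have finP: "finite P"
    by (simp add: P_def)
  have N: "N > 0"
    by (simp add: N_def)
  have "N = (\<Prod>p\<in>prime_factors N. p ^ multiplicity p N)"
    using N by (rule prime_factorization_nat)
  also have "\<dots> = (\<Prod>p\<in>P. p ^ multiplicity p N)"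
  proof (rule prod.mono_neutral_left[OF finP])
    show "prime_factors N \<subseteq> P"
    proof
      fix p
      assume "p \<in> prime_factors N"
      then have p: "prime p" and "multiplicity p N > 0"
        by (auto simp: prime_factors_multiplicity)
      then have "p \<le> p ^ multiplicity p N"
        by (intro self_le_power) (simp_all add: prime_gt_0_nat Suc_le_eq)
      also have "\<dots> \<le> 2 * n"
        unfolding N_def using p n by (rule prime_power_multiplicity_central_binomial_le)
      finally show "p \<in> P"
        using p by (simp add: P_def)
    qed
    show "\<forall>p\<in>P - prime_factors N. p ^ multiplicity p N = 1"
      by (auto simp: P_def prime_factors_multiplicity)
  qed
  also have "\<dots> \<le> (\<Prod>p\<in>P. (if p * p \<le> 2 * n then 2 * n else 1) * (if p \<le> 2 * n div 3 then p else 1)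
      * (if n < p then p else 1))"
    unfolding N_def using n by (intro prod_mono) (auto simp: P_def prime_power_multiplicity_central_binomial_le_cases)
  also have "\<dots> = (\<Prod>p\<in>P. if p * p \<le> 2 * n then 2 * n else 1)
      * (\<Prod>p\<in>P. if p \<le> 2 * n div 3 then p else 1) * (\<Prod>p\<in>P. if n < p then p else 1)"
    by (simp add: prod.distrib)
  also have "(\<Prod>p\<in>P. if p * p \<le> 2 * n then 2 * n else 1)
      = (2 * n) ^ card {p. prime p \<and> p * p \<le> 2 * n}"
  proof -
    have "{p\<in>P. p * p \<le> 2 * n} = {p. prime p \<and> p * p \<le> 2 * n}"
      by (auto simp: P_def intro: le_trans[OF le_square])
    then show ?thesis
      by (simp add: prod.inter_filter[OF finP, symmetric])
  qed
  also have "(\<Prod>p\<in>P. if p \<le> 2 * n div 3 then p else 1) = \<Prod>{p. prime p \<and> p \<le> 2 * n div 3}"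
  proof -
    have "{p\<in>P. p \<le> 2 * n div 3} = {p. prime p \<and> p \<le> 2 * n div 3}"
      by (auto simp: P_def)
    then show ?thesis
      by (simp add: prod.inter_filter[OF finP, symmetric])
  qed
  also have "(\<Prod>p\<in>P. if n < p then p else 1) = \<Prod>{p. prime p \<and> n < p \<and> p \<le> 2 * n}"
  proof -
    have "{p\<in>P. n < p} = {p. prime p \<and> n < p \<and> p \<le> 2 * n}"
      by (auto simp: P_def)
    then show ?thesis
      by (simp add: prod.inter_filter[OF finP, symmetric])
  qed
  finally show ?thesis
    unfolding N_def using primorial_le[of "2 * n div 3"] by (auto intro: order_trans mult_le_mono)
qed

section \<open>Primes in short intervals\<close>

lemma card_primes_square_le: "real (card {p::nat. prime p \<and> p * p \<le> x}) \<le> sqrt (real x)"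
proof -
  define r where "r = nat \<lfloor>sqrt (real x)\<rfloor>"
  have "{p::nat. prime p \<and> p * p \<le> x} \<subseteq> {1..r}"
  proof
    fix p
    assume p: "p \<in> {p::nat. prime p \<and> p * p \<le> x}"
    then have "real p ^ 2 \<le> real x"
      by (simp flip: of_nat_mult add: power2_eq_square)
    then have "real p \<le> sqrt (real x)"
      by (rule real_le_rsqrt)
    then show "p \<in> {1..r}"
      using p prime_ge_1_nat unfolding r_def by (auto simp: le_nat_floor)
  qed
  then have "card {p::nat. prime p \<and> p * p \<le> x} \<le> card {1..r}"
    by (rule card_mono[rotated]) simp
  then have "real (card {p::nat. prime p \<and> p * p \<le> x}) \<le> real r"
    by simp
  also have "\<dots> \<le> sqrt (real x)"
    by (simp add: r_def)
  finally show ?thesis .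
qed

lemma power_card_primes_square_le:
  assumes "x > 0"
  shows "real x ^ card {p::nat. prime p \<and> p * p \<le> x} \<le> real x powr sqrt (real x)"
proof -
  have "real x ^ card {p::nat. prime p \<and> p * p \<le> x} = real x powr card {p. prime p \<and> p * p \<le> x}"
    using assms by (simp add: powr_realpow)
  also have "\<dots> \<le> real x powr sqrt (real x)"
    using assms card_primes_square_le[of x] by (intro powr_mono) auto
  finally show ?thesis .
qed

lemma power_div_fact_le_exp:
  fixes x :: real
  assumes "x \<ge> 0"
  shows "x ^ n / fact n \<le> exp x"
proof -
  have "(\<lambda>k. x ^ k / fact k) sums exp x"
    using exp_converges[of x] by (simp add: field_simps)
  moreover have "(\<Sum>k\<in>{n}. x ^ k / fact k) \<le> (\<Sum>k. x ^ k / fact k)"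
    using calculation assms by (intro sum_le_suminf) (auto simp: sums_iff)
  ultimately show ?thesis
    by (simp add: sums_iff)
qed

lemma binomial_le_exp_pow:
  assumes "k > 0"
  shows "real (n choose k) \<le> (exp 1 * n / k) ^ k"
proof -
  have "real (n choose k) * fact k \<le> real n ^ k"
    by (metis binomial_fact_pow of_nat_fact of_nat_le_iff of_nat_mult of_nat_power)
  then have "real (n choose k) \<le> real n ^ k / fact k"
    by (simp add: field_simps)
  also have "\<dots> = (real n / real k) ^ k * (real k ^ k / fact k)"
    using assms by (simp add: power_divide)
  also have "\<dots> \<le> (real n / real k) ^ k * exp (real k)"
    by (intro mult_left_mono power_div_fact_le_exp) auto
  also have "exp (real k) = exp 1 ^ k"
    by (simp flip: exp_of_nat_mult)
  finally show ?thesis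
    by (metis mult.commute power_mult_distrib times_divide_eq_right)
qed

lemma binomial_40t_t_le: "real ((40 * t) choose t) \<le> 120 ^ t"
proof (cases "t = 0")
  case False
  then have "real ((40 * t) choose t) \<le> (exp 1 * 40) ^ t"
    using binomial_le_exp_pow[of t "40 * t"] by simp
  also have "\<dots> \<le> 120 ^ t"
    using exp_le by (intro power_mono) auto
  finally show ?thesis .
qed simp

text \<open>If \<open>(20t, 39t]\<close> contains no prime, the primes in \<open>(20t, 40t]\<close> lie in \<open>(39t, 40t]\<close>,
  so their product divides the small binomial coefficient \<open>40t choose t\<close>.\<close>
lemma central_binomial_le_if_no_prime_between:
  fixes t :: nat
  assumes t: "t > 0" and none: "\<nexists>p. prime p \<and> 20 * t < p \<and> p \<le> 39 * t"
  shows "real ((2 * (20 * t)) choose (20 * t))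
    \<le> real (40 * t) powr sqrt (real (40 * t)) * 4 ^ (40 * t div 3) * 120 ^ t"
proof -
  have "{p. prime p \<and> 20 * t < p \<and> p \<le> 2 * (20 * t)} = {p. prime p \<and> 39 * t < p \<and> p \<le> 40 * t}"
    using none by (auto simp flip: not_le)
  then have "\<Prod>{p. prime p \<and> 20 * t < p \<and> p \<le> 2 * (20 * t)} \<le> (40 * t) choose (39 * t)"
    by (auto intro: dvd_imp_le[OF prod_primes_between_dvd_binomial])
  also have "\<dots> = (40 * t) choose t"
    using binomial_symmetric[of t "40 * t"] by simp
  finally have large: "real (\<Prod>{p. prime p \<and> 20 * t < p \<and> p \<le> 2 * (20 * t)}) \<le> 120 ^ t"
    using binomial_40t_t_le[of t] by linarith
  have small: "real (40 * t) ^ card {p. prime p \<and> p * p \<le> 40 * t}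
      \<le> real (40 * t) powr sqrt (real (40 * t))"
    using t by (intro power_card_primes_square_le) simp
  have "(2 * (20 * t)) choose (20 * t) \<le> (40 * t) ^ card {p. prime p \<and> p * p \<le> 40 * t}
      * 4 ^ (40 * t div 3) * \<Prod>{p. prime p \<and> 20 * t < p \<and> p \<le> 2 * (20 * t)}"
    using central_binomial_le_erdos[of "20 * t"] t by simp
  then have "real ((2 * (20 * t)) choose (20 * t))
      \<le> real ((40 * t) ^ card {p. prime p \<and> p * p \<le> 40 * t} * 4 ^ (40 * t div 3)
        * \<Prod>{p. prime p \<and> 20 * t < p \<and> p \<le> 2 * (20 * t)})"
    by (simp only: of_nat_le_iff)
  also have "\<dots> = real (40 * t) ^ card {p. prime p \<and> p * p \<le> 40 * t} * 4 ^ (40 * t div 3)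
        * real (\<Prod>{p. prime p \<and> 20 * t < p \<and> p \<le> 2 * (20 * t)})"
    by (simp only: of_nat_mult of_nat_power of_nat_numeral)
  also have "\<dots> \<le> real (40 * t) powr sqrt (real (40 * t)) * 4 ^ (40 * t div 3) * 120 ^ t"
    by (intro mult_mono mult_right_mono small large) (auto intro!: prod_nonneg)
  finally show ?thesis .
qed

text \<open>Against the lower bound \<open>4 ^ (20t) / (40t)\<close>, the factor \<open>4 ^ (20t - 40t/3)\<close> left over
  exceeds \<open>2 ^ t * 120 ^ t\<close>.\<close>
lemma two_pow_le_if_no_prime_between:
  fixes t :: nat
  assumes t: "t > 0" and none: "\<nexists>p. prime p \<and> 20 * t < p \<and> p \<le> 39 * t"
  shows "2 ^ t \<le> 40 * real t * (40 * real t) powr sqrt (40 * real t)"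
proof -
  define d where "d = 40 * t div 3"
  define C where "C = real ((2 * (20 * t)) choose (20 * t))"
  define s where "s = real (40 * t) powr sqrt (real (40 * t))"
  have upper: "C \<le> s * 4 ^ d * 120 ^ t"
    unfolding C_def s_def d_def using t none by (rule central_binomial_le_if_no_prime_between)
  have "4 ^ (20 * t) / (2 * real (20 * t)) \<le> C"
    unfolding C_def using t by (intro central_binomial_lower_bound) simp
  then have lower: "4 ^ (20 * t) \<le> 40 * real t * C"
    using t by (simp add: field_simps)
  have "(2::real) ^ t * 120 ^ t \<le> 4096 ^ t"
    by (simp flip: power_mult_distrib add: power_mono)
  also have "\<dots> = 4 ^ (6 * t)"
    by (simp add: power_mult)
  also have "\<dots> \<le> 4 ^ (20 * t - d)"
    unfolding d_def by (intro power_increasing) auto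
  finally have "4 ^ d * (2 ^ t * 120 ^ t) \<le> (4::real) ^ d * 4 ^ (20 * t - d)"
    by simp
  also have "\<dots> = 4 ^ (20 * t)"
    unfolding d_def by (simp flip: power_add)
  also have "\<dots> \<le> 40 * real t * C"
    by (rule lower)
  also have "\<dots> \<le> 40 * real t * (s * 4 ^ d * 120 ^ t)"
    using upper by (intro mult_left_mono) auto
  finally have "(4 ^ d * 120 ^ t) * 2 ^ t \<le> (4 ^ d * 120 ^ t) * (40 * real t * s)"
    by (simp add: algebra_simps)
  then show ?thesis
    by (simp add: s_def)
qed

lemma eventually_prime_between_20_39: "\<forall>\<^sub>F t in sequentially. \<exists>p. prime p \<and> 20 * t < p \<and> p \<le> 39 * t"
proof -
  have "\<forall>\<^sub>F t in sequentially. 40 * real t * (40 * real t) powr sqrt (40 * real t) < 2 ^ t"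
    by real_asymp
  moreover have "\<forall>\<^sub>F t in sequentially. t > 0"
    by (rule eventually_gt_at_top)
  ultimately show ?thesis
    by eventually_elim (use two_pow_le_if_no_prime_between in \<open>meson not_le\<close>)
qed

lemma eventually_prime_between: "\<forall>\<^sub>F x in sequentially. \<exists>p. prime p \<and> x < p \<and> 25 * p \<le> 49 * x"
proof -
  obtain T :: nat where T: "\<And>t. t \<ge> T \<Longrightarrow> \<exists>p. prime p \<and> 20 * t < p \<and> p \<le> 39 * t"
    using eventually_prime_between_20_39 unfolding eventually_sequentially by blast
  show ?thesis
    unfolding eventually_sequentially
  proof (rule exI[of _ "20 * T + 3900"], intro allI impI)
    fix x :: nat
    assume x: "20 * T + 3900 \<le> x"
    define t where "t = x div 20 + 1"
    have "20 * t = 20 * (x div 20) + 20" "x = 20 * (x div 20) + x mod 20" "x mod 20 < 20"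
      by (simp_all add: t_def)
    then have t: "x < 20 * t" "20 * t \<le> x + 20" "T \<le> t"
      using x by linarith+
    then obtain p where "prime p" "20 * t < p" "p \<le> 39 * t"
      using T by blast
    moreover from this t x have "x < p" "25 * p \<le> 49 * x"
      by linarith+
    ultimately show "\<exists>p. prime p \<and> x < p \<and> 25 * p \<le> 49 * x"
      by blast
  qed
qed

lemma less_power_self:
  fixes b n :: nat
  assumes "b \<ge> 2"
  shows "n < b ^ n"
proof -
  have "n < 2 ^ n"
    by (rule less_exp)
  also have "\<dots> \<le> b ^ n"
    using assms by (intro power_mono) auto
  finally show ?thesis .
qed

lemma eventually_prime_above_power:
  fixes B :: nat
  assumes "B \<ge> 2"
  shows "\<forall>\<^sub>F j in sequentially. \<exists>p. prime p \<and> B ^ j < p \<and> 25 * p \<le> 49 * B ^ j"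
proof -
  obtain X :: nat where X: "\<And>x. x \<ge> X \<Longrightarrow> \<exists>p. prime p \<and> x < p \<and> 25 * p \<le> 49 * x"
    using eventually_prime_between unfolding eventually_sequentially by blast
  show ?thesis
    unfolding eventually_sequentially
  proof (rule exI[of _ X], intro allI impI)
    fix j
    assume "X \<le> j"
    then have "X \<le> B ^ j"
      using less_power_self[OF assms, of j] by linarith
    then show "\<exists>p. prime p \<and> B ^ j < p \<and> 25 * p \<le> 49 * B ^ j"
      by (rule X)
  qed
qed

section \<open>Digit counts of products of primes\<close>

lemma ndigits_eqI:
  fixes B n k :: nat
  assumes B: "B \<ge> 2" and k: "B ^ (k - 1) \<le> n" "n < B ^ k"
  shows "ndigits B n = k"
  unfolding ndigits_def
proof (rule the_equality)
  show "B ^ (k - 1) \<le> n \<and> n < B ^ k"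
    using k by simp
  fix k'
  assume k': "B ^ (k' - 1) \<le> n \<and> n < B ^ k'"
  have B1: "1 < B"
    using B by simp
  have "k' - 1 < k" "k - 1 < k'"
    using k k' by (auto intro: power_less_imp_less_exp[OF B1])
  then show "k' = k"
    by linarith
qed

lemma ndigits_le:
  fixes B n K :: nat
  assumes B: "B \<ge> 2" and n: "0 < n" "n < B ^ K"
  shows "ndigits B n \<le> K"
proof -
  define k where "k = (LEAST k. n < B ^ k)"
  have "n < B ^ k" "k \<le> K"
    unfolding k_def using n by (auto intro: LeastI Least_le)
  moreover have "B ^ (k - 1) \<le> n"
  proof (cases "k = 0")
    case False
    then have "\<not> n < B ^ (k - 1)"
      unfolding k_def by (intro not_less_Least) (simp add: k_def)
    then show ?thesis
      by simp
  qed (use n in simp)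
  ultimately show ?thesis
    using ndigits_eqI[OF B] by simp
qed

lemma phi_digits_prod_primes:
  fixes S :: "nat set"
  assumes S: "finite S" "\<And>p. p \<in> S \<Longrightarrow> prime p"
  shows "phi_digits B (\<Prod>S) = (\<Sum>p\<in>S. ndigits B p)"
proof -
  have mult: "multiplicity p (\<Prod>S) = (if p \<in> S then 1 else 0)" if "prime p" for p
    using multiplicity_prod_prime_powers[OF S that, of "\<lambda>_. 1"] by simp
  then have "prime_factors (\<Prod>S) = S"
    using S by (auto simp: prime_factors_multiplicity split: if_splits)
  then show ?thesis
    unfolding phi_digits_def using S by (intro sum.cong) (simp_all add: mult ndigits'_def)
qed

lemma prod_less_power_sum:
  fixes B K m a b :: nat and J :: "nat set" and f :: "nat \<Rightarrow> nat"
  assumes B: "B > 0" and J: "finite J" "card J = m" and K: "K \<le> m"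
    and f: "\<And>j. j \<in> J \<Longrightarrow> b * f j \<le> a * B ^ j"
    and ab: "a ^ m * B ^ K < (b * B) ^ m"
  shows "(\<Prod>j\<in>J. f j) < B ^ (\<Sum>J + m - K)"
proof -
  have "b ^ m * (\<Prod>j\<in>J. f j) = (\<Prod>j\<in>J. b * f j)"
    using J by (simp add: prod.distrib)
  also have "\<dots> \<le> (\<Prod>j\<in>J. a * B ^ j)"
    by (intro prod_mono) (simp add: f)
  also have "\<dots> = a ^ m * B ^ \<Sum>J"
    using J by (simp add: prod.distrib power_sum)
  finally have "b ^ m * (\<Prod>j\<in>J. f j) * B ^ K \<le> a ^ m * B ^ K * B ^ \<Sum>J"
    by (simp add: mult.commute mult.left_commute)
  also have "\<dots> < (b * B) ^ m * B ^ \<Sum>J"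
    using ab B by simp
  also have "\<dots> = b ^ m * B ^ K * B ^ (\<Sum>J + m - K)"
    using K by (simp add: power_mult_distrib mult.assoc add.commute flip: power_add)
  finally show ?thesis
    by (simp add: mult.commute mult.left_commute)
qed

lemma ndigits_eq_Suc_if_le:
  fixes B a b p j :: nat
  assumes B: "B \<ge> 2" and p: "B ^ j < p" "b * p \<le> a * B ^ j" and ab: "a < b * B"
  shows "ndigits B p = j + 1"
proof (rule ndigits_eqI[OF B])
  show "B ^ (j + 1 - 1) \<le> p"
    using p by simp
  have "b * p \<le> a * B ^ j"
    by (rule p(2))
  also have "\<dots> < b * B * B ^ j"
    using ab B by simp
  also have "\<dots> = b * B ^ (j + 1)"
    by simp
  finally show "p < B ^ (j + 1)"
    by simp
qed

lemma h_digits_prod_primes_above_powers: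
  fixes B K m a b :: nat and J :: "nat set" and P :: "nat \<Rightarrow> nat"
  assumes B: "B \<ge> 2" and J: "finite J" "card J = m" and K: "K \<le> m"
    and P: "\<And>j. j \<in> J \<Longrightarrow> prime (P j) \<and> B ^ j < P j \<and> b * P j \<le> a * B ^ j"
    and ab: "a ^ m * B ^ K < (b * B) ^ m"
  shows "h_digits B (\<Prod>j\<in>J. P j) \<le> - int K"
proof -
  have "a ^ m \<le> a ^ m * B ^ K"
    using B by simp
  with ab have "a ^ m < (b * B) ^ m"
    by linarith
  then have ab': "a < b * B"
    by (rule power_less_imp_less_base) simp
  have digits: "ndigits B (P j) = j + 1" if "j \<in> J" for j
    using P[OF that] ab' by (intro ndigits_eq_Suc_if_le[OF B]) auto
  then have inj: "inj_on P J"
    by (metis inj_onI add_right_cancel)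
  have "phi_digits B (\<Prod>j\<in>J. P j) = phi_digits B (\<Prod>(P ` J))"
    using inj by (simp add: prod.reindex)
  also have "\<dots> = (\<Sum>p\<in>P ` J. ndigits B p)"
    using J P by (intro phi_digits_prod_primes) auto
  also have "\<dots> = (\<Sum>j\<in>J. j + 1)"
    using inj by (simp add: sum.reindex digits)
  also have "\<dots> = \<Sum>J + m"
    using J sum.distrib[of "\<lambda>j. j" "\<lambda>j. 1" J] by simp
  finally have phi: "phi_digits B (\<Prod>j\<in>J. P j) = \<Sum>J + m" .
  have "(\<Prod>j\<in>J. P j) < B ^ (\<Sum>J + m - K)"
    using B J K P ab by (intro prod_less_power_sum) auto
  then have "ndigits B (\<Prod>j\<in>J. P j) \<le> \<Sum>J + m - K"
    using B J P by (intro ndigits_le) (auto intro!: prod_pos prime_gt_0_nat)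
  then show ?thesis
    unfolding h_digits_def phi using K by linarith
qed

lemma eventually_pow_49_less:
  fixes B K :: nat
  assumes "B \<ge> 2"
  shows "\<forall>\<^sub>F m in sequentially. 49 ^ m * B ^ K < (25 * B) ^ m"
proof -
  have "\<forall>\<^sub>F m in sequentially. real (49 ^ m * B ^ K) < real (50 ^ m :: nat)"
    by real_asymp
  then show ?thesis
  proof eventually_elim
    case (elim m)
    then have "49 ^ m * B ^ K < 50 ^ m"
      by (simp only: of_nat_less_iff)
    also have "\<dots> \<le> (25 * B) ^ m"
      using assms by (intro power_mono) auto
    finally show ?case .
  qed
qed

lemma ex_large_h_digits_le:
  fixes B K N a b :: nat
  assumes B: "B \<ge> 2"
    and primes: "\<forall>\<^sub>F j in sequentially. \<exists>p. prime p \<and> B ^ j < p \<and> b * p \<le> a * B ^ j"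
    and ratio: "\<forall>\<^sub>F m in sequentially. a ^ m * B ^ K < (b * B) ^ m"
  shows "\<exists>n\<ge>N. n > 0 \<and> h_digits B n \<le> - int K"
proof -
  obtain X where "\<forall>j\<ge>X. \<exists>p. prime p \<and> B ^ j < p \<and> b * p \<le> a * B ^ j"
    using primes unfolding eventually_sequentially by blast
  then have "\<forall>j. \<exists>p. X \<le> j \<longrightarrow> prime p \<and> B ^ j < p \<and> b * p \<le> a * B ^ j"
    by blast
  from choice[OF this] obtain P
    where P: "\<And>j. X \<le> j \<Longrightarrow> prime (P j) \<and> B ^ j < P j \<and> b * P j \<le> a * B ^ j"
    by blast
  obtain m where m: "max 1 K \<le> m" "a ^ m * B ^ K < (b * B) ^ m"
    using eventually_conj[OF eventually_ge_at_top ratio] unfolding eventually_sequentially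
    using order_refl by blast
  define D where "D = max X N"
  define n where "n = (\<Prod>j\<in>{D..<D + m}. P j)"
  have "h_digits B n \<le> - int K"
    unfolding n_def using B m P by (intro h_digits_prod_primes_above_powers) (auto simp: D_def)
  moreover have "n > 0"
    unfolding n_def using P by (auto intro!: prod_pos prime_gt_0_nat simp: D_def)
  moreover have "N \<le> n"
  proof -
    have "D \<in> {D..<D + m}"
      using m(1) by simp
    then have "P D \<le> n"
      unfolding n_def using \<open>n > 0\<close> by (intro dvd_imp_le) (auto simp: n_def)
    moreover have "D < B ^ D"
      using B by (rule less_power_self)
    ultimately show ?thesis
      using P[of D] by (simp add: D_def)
  qed
  ultimately show ?thesis
    by blast
qed

theorem proposition5:
  fixes B :: nat and k :: int
  assumes "B \<ge> 2" and "k > 0"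
  shows "infinite {n::nat. n > 0 \<and> h_digits B n \<le> - k}"
proof -
  have "\<exists>n\<ge>N. n > 0 \<and> h_digits B n \<le> - int (nat k)" for N
    using assms(1) eventually_prime_above_power[OF assms(1)] eventually_pow_49_less[OF assms(1)]
    by (rule ex_large_h_digits_le)
  then show ?thesis
    unfolding infinite_nat_iff_unbounded_le using assms(2) by simp
qed

end
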